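(* Let $Q=\Diamond abcd$ be a convex quadrilateral with vertices $a,b,c,d$ in clockwise order, such that the diagonal $\overline{ac}$ is horizontal, $|ac|=1$, and $1$ is the diameter of $Q$. Let the smallest axis-parallel rectangle containing $Q$ have horizontal side length $1$ and vertical side length $W$ with $0<W\le 1$, with $a$ on its left side, $b$ on its top side, $c$ on its right side and $d$ on its bottom side. Let $r=\frac14\sqrt{1+4W^2}$ (the radius of the two congruent disks circumscribing the two halves of this rectangle cut by a vertical line through its center). Then $r<1.84\, r_{opt}(Q)$.
   Context: For a compact set $X\subset\mathbb{R}^2$, $r_{opt}(X)$ denotes the minimum $r$ such that two closed disks of radius $r$ have union containing $X$. *)

theory Defs
  imports "HOL-Analysis.Analysis"
begin

text \<open>Points of the plane are modelled as real \<times> real (Euclidean norm).\<close>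

definition r_opt :: "(real \<times> real) set \<Rightarrow> real" where
  "r_opt X = Inf {r. 0 \<le> r \<and> (\<exists>p q. X \<subseteq> cball p r \<union> cball q r)}"

definition cross :: "real \<times> real \<Rightarrow> real \<times> real \<Rightarrow> real" where
  "cross u v = fst u * snd v - snd u * fst v"

text \<open>Strictly convex quadrilateral with vertices in clockwise order: every turn
  p1 -> p2 -> p3 along the boundary is a strict right turn.\<close>
definition convex_quad_cw :: "real \<times> real \<Rightarrow> real \<times> real \<Rightarrow> real \<times> real \<Rightarrow> real \<times> real \<Rightarrow> bool" where
  "convex_quad_cw a b c d \<longleftrightarrow>
     cross (b - a) (c - b) < 0 \<and> cross (c - b) (d - c) < 0 \<and>
     cross (d - c) (a - d) < 0 \<and> cross (a - d) (b - a) < 0"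

end

theory Submission
  imports Defs
begin

text \<open>Let two disks of radius \<open>r\<close> cover \<open>Q\<close>. The points \<open>a\<close>, \<open>c\<close> and the midpoint of \<open>ac\<close>
  force \<open>r \<ge> 1/4\<close>. If \<open>a\<close> and \<open>c\<close>, or \<open>b\<close> and \<open>d\<close>, share a disk, then \<open>2r \<ge> 1\<close> or \<open>2r \<ge> W\<close>.
  Otherwise each disk contains one endpoint of each diagonal, and the midpoints of \<open>ac\<close> and of
  two opposite sides of \<open>Q\<close> must be covered as well. Replacing every Euclidean distance bound
  by a circumscribed octagon turns each of the resulting eight cases into a linear program,
  which gives \<open>r \<ge> 13/200 + 6W/25\<close>. Finally \<open>\<surd>(1 + 4W\<^sup>2)/4\<close> is below \<open>1.84\<close> times the larger
  of the two lower bounds.\<close>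

definition in_octagon :: "real \<Rightarrow> real \<times> real \<Rightarrow> bool" where
  "in_octagon s v \<longleftrightarrow>
     \<bar>fst v\<bar> \<le> s \<and> \<bar>snd v\<bar> \<le> s \<and>
     \<bar>fst v + snd v\<bar> \<le> 14143/10000 * s \<and> \<bar>fst v - snd v\<bar> \<le> 14143/10000 * s"

lemma norm_le_imp_in_octagon:
  fixes v :: "real \<times> real"
  assumes "norm v \<le> s"
  shows "in_octagon s v"
proof (cases v)
  case (Pair x y)
  have s: "0 \<le> s"
    using assms norm_ge_zero order_trans by blast
  have sum: "x\<^sup>2 + y\<^sup>2 \<le> s\<^sup>2"
    using assms Pair by (intro sqrt_le_D) (simp add: norm_Pair)
  have "(x + y)\<^sup>2 \<le> 2 * s\<^sup>2" "(x - y)\<^sup>2 \<le> 2 * s\<^sup>2"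
    using sum zero_le_power2[of "x + y"] zero_le_power2[of "x - y"]
    unfolding power2_diff power2_sum by linarith+
  moreover have "2 * s\<^sup>2 \<le> (14143/10000 * s)\<^sup>2"
    unfolding power_mult_distrib by (intro mult_right_mono) (simp_all add: power2_eq_square)
  ultimately have "x\<^sup>2 \<le> s\<^sup>2" "y\<^sup>2 \<le> s\<^sup>2"
    "(x + y)\<^sup>2 \<le> (14143/10000 * s)\<^sup>2" "(x - y)\<^sup>2 \<le> (14143/10000 * s)\<^sup>2"
    using sum zero_le_power2[of x] zero_le_power2[of y] by linarith+
  then show ?thesis
    using s Pair unfolding in_octagon_def
    by (simp add: abs_le_square_iff[symmetric])
qed

lemma dist_le_twice_radius:
  assumes "p \<in> cball w r" "q \<in> cball w r"
  shows "dist p q \<le> 2 * r"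
  using assms dist_triangle[of p q w] by (simp add: dist_commute)

lemma cball_pair_in_octagon:
  fixes p q w :: "real \<times> real"
  assumes "p \<in> cball w r" "q \<in> cball w r"
  shows "in_octagon (2 * r) (p - q)"
  using dist_le_twice_radius[OF assms] by (simp add: dist_norm norm_le_imp_in_octagon)

lemma two_cball_cover_dist_le:
  fixes a c u v :: "'a::real_normed_vector"
  assumes "a \<in> cball u r \<union> cball v r" "c \<in> cball u r \<union> cball v r"
    and "midpoint a c \<in> cball u r \<union> cball v r"
  shows "dist a c \<le> 4 * r"
proof -
  have "dist a (midpoint a c) = dist a c / 2" "dist (midpoint a c) c = dist a c / 2"
    by (simp_all add: dist_midpoint)
  moreover have "dist a c \<le> 2 * r \<or> dist a (midpoint a c) \<le> 2 * r \<or> dist (midpoint a c) c \<le> 2 * r"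
    using assms dist_le_twice_radius by blast
  ultimately show ?thesis
    using zero_le_dist[of a c] by linarith
qed

lemma two_cball_cover_bound_separated:
  fixes a b c d u v :: "real \<times> real"
  assumes "a \<in> cball u r" "b \<in> cball u r" "c \<in> cball v r" "d \<in> cball v r"
    and "midpoint a c \<in> cball u r \<union> cball v r" "midpoint b c \<in> cball u r \<union> cball v r"
    and "midpoint d a \<in> cball u r \<union> cball v r"
    and "dist b d \<le> 1"
    and "snd a = snd c" "fst c - fst a = 1"
    and "fst a \<le> fst b" "fst b \<le> fst c" "fst a \<le> fst d" "fst d \<le> fst c"
    and "snd d \<le> snd a" "snd a \<le> snd b" "snd b - snd d = W"
  shows "13/200 + 6/25 * W \<le> r"
proof -
  have covered: "in_octagon (2*r) (m - a) \<and> in_octagon (2*r) (m - b) \<or>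
                 in_octagon (2*r) (m - c) \<and> in_octagon (2*r) (m - d)"
    if "m \<in> cball u r \<union> cball v r" for m
    using that assms(1-4) cball_pair_in_octagon by blast
  have "in_octagon (2*r) (b - a)" "in_octagon (2*r) (d - c)"
    using assms(1-4) cball_pair_in_octagon by blast+
  moreover have "in_octagon 1 (b - d)"
    using assms(8) by (simp add: dist_norm norm_le_imp_in_octagon)
  ultimately show ?thesis
    using covered[OF assms(5)] covered[OF assms(6)] covered[OF assms(7)] assms(9-)
    unfolding in_octagon_def midpoint_def abs_le_iff
    by (simp add: field_simps) (elim disjE conjE; argo)
qed

definition reflect_x_axis :: "real \<times> real \<Rightarrow> real \<times> real" where
  "reflect_x_axis p = (fst p, - snd p)"

lemma dist_reflect_x_axis [simp]: "dist (reflect_x_axis p) (reflect_x_axis q) = dist p q"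
  by (simp add: reflect_x_axis_def dist_prod_def dist_real_def abs_minus_commute)

lemma fst_reflect_x_axis [simp]: "fst (reflect_x_axis p) = fst p"
  and snd_reflect_x_axis [simp]: "snd (reflect_x_axis p) = - snd p"
  by (simp_all add: reflect_x_axis_def)

lemma midpoint_reflect_x_axis [simp]:
  "midpoint (reflect_x_axis p) (reflect_x_axis q) = reflect_x_axis (midpoint p q)"
  by (simp add: reflect_x_axis_def midpoint_def field_simps)

lemma two_cball_cover_bound_crossed:
  fixes a b c d u v :: "real \<times> real"
  assumes "a \<in> cball u r" "d \<in> cball u r" "b \<in> cball v r" "c \<in> cball v r"
    and "midpoint a c \<in> cball u r \<union> cball v r" "midpoint d c \<in> cball u r \<union> cball v r"
    and "midpoint b a \<in> cball u r \<union> cball v r"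
    and "dist b d \<le> 1"
    and "snd a = snd c" "fst c - fst a = 1"
    and "fst a \<le> fst b" "fst b \<le> fst c" "fst a \<le> fst d" "fst d \<le> fst c"
    and "snd d \<le> snd a" "snd a \<le> snd b" "snd b - snd d = W"
  shows "13/200 + 6/25 * W \<le> r"
  using assms
  by (intro two_cball_cover_bound_separated[of "reflect_x_axis a" "reflect_x_axis u" r "reflect_x_axis d"
        "reflect_x_axis c" "reflect_x_axis v" "reflect_x_axis b"])
     (auto simp: dist_commute)

lemma two_cball_cover_bound:
  fixes a b c d u v :: "real \<times> real"
  assumes cover: "convex hull {a, b, c, d} \<subseteq> cball u r \<union> cball v r"
    and "dist b d \<le> 1"
    and "snd a = snd c" "fst c - fst a = 1"
    and "fst a \<le> fst b" "fst b \<le> fst c" "fst a \<le> fst d" "fst d \<le> fst c"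
    and "snd d \<le> snd a" "snd a \<le> snd b" "snd b - snd d = W"
  shows "max (1/4) (13/200 + 6/25 * W) \<le> r"
proof -
  let ?D = "cball u r \<union> cball v r"
  have vertex_covered: "p \<in> ?D" if "p \<in> {a, b, c, d}" for p
    using cover hull_inc[OF that] by blast
  have midpoint_covered: "midpoint p q \<in> ?D" if "p \<in> {a, b, c, d}" "q \<in> {a, b, c, d}" for p q
    using cover midpoints_in_convex_hull[OF hull_inc[OF that(1)] hull_inc[OF that(2)]] by blast
  have "dist a c = 1"
    using assms(3,4) by (simp add: dist_prod_def dist_real_def)
  then have quarter: "1/4 \<le> r"
    using two_cball_cover_dist_le[OF vertex_covered[of a] vertex_covered[of c] midpoint_covered[of a c]] by simp
  have "\<bar>snd b - snd d\<bar> \<le> dist b d"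
    by (metis dist_snd_le dist_real_def)
  then have W_le_1: "W \<le> 1"
    using assms(2,11) by linarith
  have vertices: "a \<in> cball u r \<or> a \<in> cball v r" "b \<in> cball u r \<or> b \<in> cball v r"
    "c \<in> cball u r \<or> c \<in> cball v r" "d \<in> cball u r \<or> d \<in> cball v r"
    using vertex_covered by blast+
  have mids: "midpoint a c \<in> ?D" "midpoint b c \<in> ?D" "midpoint d a \<in> ?D"
    "midpoint d c \<in> ?D" "midpoint b a \<in> ?D"
    by (rule midpoint_covered; simp)+
  note mids' = mids[unfolded Un_commute[of "cball u r"]]
  have same_ac: "13/200 + 6/25 * W \<le> r" if "a \<in> cball w r" "c \<in> cball w r" for w
    using dist_le_twice_radius[OF that] \<open>dist a c = 1\<close> W_le_1 by linarith
  have same_bd: "13/200 + 6/25 * W \<le> r" if "b \<in> cball w r" "d \<in> cball w r" for w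
    using dist_le_twice_radius[OF that] \<open>\<bar>snd b - snd d\<bar> \<le> dist b d\<close> assms(11) quarter
    by linarith
  have "13/200 + 6/25 * W \<le> r"
    using vertices same_ac[of u] same_ac[of v] same_bd[of u] same_bd[of v]
      two_cball_cover_bound_separated[OF _ _ _ _ mids(1-3) assms(2-)]
      two_cball_cover_bound_separated[OF _ _ _ _ mids'(1-3) assms(2-)]
      two_cball_cover_bound_crossed[OF _ _ _ _ mids(1,4,5) assms(2-)]
      two_cball_cover_bound_crossed[OF _ _ _ _ mids'(1,4,5) assms(2-)]
    by blast
  with quarter show ?thesis
    by simp
qed

lemma r_opt_greatest:
  assumes "bounded X"
    and "\<And>p q r. 0 \<le> r \<Longrightarrow> X \<subseteq> cball p r \<union> cball q r \<Longrightarrow> B \<le> r"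
  shows "B \<le> r_opt X"
proof -
  obtain R p where "X \<subseteq> cball p R" "0 \<le> R"
    using assms(1) bounded_subset_cball by blast
  then have "{r. 0 \<le> r \<and> (\<exists>p q. X \<subseteq> cball p r \<union> cball q r)} \<noteq> {}"
    by blast
  then show ?thesis
    unfolding r_opt_def using assms(2) by (intro cInf_greatest) auto
qed

lemma half_box_circumradius_lt:
  fixes W :: real
  assumes "0 < W" "W \<le> 1"
  shows "sqrt (1 + 4 * W\<^sup>2) / 4 < 1.84 * max (1/4) (13/200 + 6/25 * W)"
proof (cases "W \<le> 0.772")
  case True
  then have "W\<^sup>2 \<le> 0.772\<^sup>2"
    using assms(1) by (intro power_mono) auto
  then have "sqrt (1 + 4 * W\<^sup>2) < 1.84"
    by (intro real_less_lsqrt) (auto simp: power2_eq_square)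
  then have "sqrt (1 + 4 * W\<^sup>2) / 4 < 1.84 * (1/4)"
    by simp
  also have "\<dots> \<le> 1.84 * max (1/4) (13/200 + 6/25 * W)"
    by (intro mult_left_mono) auto
  finally show ?thesis .
next
  case False
  have "0 \<le> (1000 * W - 772) * (1 - W)"
    using False assms by (intro mult_nonneg_nonneg) auto
  then have "1 + 4 * W\<^sup>2 < ((299 + 1104 * W) / 625)\<^sup>2"
    using False by (simp add: power2_eq_square field_simps)
  then have "sqrt (1 + 4 * W\<^sup>2) < (299 + 1104 * W) / 625"
    using assms by (intro real_less_lsqrt) auto
  then have "sqrt (1 + 4 * W\<^sup>2) / 4 < 1.84 * (13/200 + 6/25 * W)"
    by simp
  also have "\<dots> \<le> 1.84 * max (1/4) (13/200 + 6/25 * W)"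
    by (intro mult_left_mono) auto
  finally show ?thesis .
qed

theorem lemma7:
  fixes a b c d :: "real \<times> real" and W :: real
  assumes quad: "convex_quad_cw a b c d"
    and horiz: "snd a = snd c"
    and ac: "dist a c = 1"
    and diam: "diameter (convex hull {a, b, c, d}) = 1"
    and W: "0 < W" "W \<le> 1"
    and box: "\<forall>p\<in>{a, b, c, d}. fst a \<le> fst p \<and> fst p \<le> fst c \<and> snd d \<le> snd p \<and> snd p \<le> snd b"
    and width: "fst c - fst a = 1"
    and height: "snd b - snd d = W"
  shows "sqrt (1 + 4 * W\<^sup>2) / 4 < 1.84 * r_opt (convex hull {a, b, c, d})"
proof -
  let ?Q = "convex hull {a, b, c, d}"
  have bounded: "bounded ?Q"
    by (simp add: finite_imp_bounded_convex_hull)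
  have "dist b d \<le> 1"
    using diameter_bounded_bound[OF bounded] diam by (simp add: hull_inc)
  have "sqrt (1 + 4 * W\<^sup>2) / 4 < 1.84 * max (1/4) (13/200 + 6/25 * W)"
    using W by (rule half_box_circumradius_lt)
  also have "\<dots> \<le> 1.84 * r_opt ?Q"
    using \<open>dist b d \<le> 1\<close> box horiz width height
    by (intro mult_left_mono r_opt_greatest[OF bounded] two_cball_cover_bound) auto
  finally show ?thesis .
qed

end
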